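(* Let $L$ be a homogeneous second-order Lagrangian with fundamental form $\Theta$ (a 2-form on $\mathcal F^5_{(2)}E$). Then $\Theta$ is projectable to $\mathcal F^4_{(2)}E$ (it is the pull-back of a 2-form on $\mathcal F^4_{(2)}E$), and it is horizontal over $\mathcal F^2_{(2)}E$ (its contraction with any vector field vertical over $\mathcal F^2_{(2)}E$ vanishes).
   Context: Let $E$ be a smooth manifold of dimension $n$ with local coordinates $(u^\alpha)$. For $k\ge 1$, $\mathcal F^k_{(2)}E$ denotes the bundle of $k$-th order 2-frames in $E$ (regular $k$-th order 2-velocities, i.e. $k$-jets at $0$ of maps $\mathbb R^2\to E$ of rank 2 at $0$), with induced coordinates $u^\alpha_{i_1\cdots i_s}$ ($0\le s\le k$, indices in $\{1,2\}$, totally symmetric in the subscripts). Pull-backs along the projections $\mathcal F^l_{(2)}E\to\mathcal F^k_{(2)}E$ are omitted. $\#(i_1\cdots i_s)$ denotes the number of distinct rearrangements of $(i_1,\dots,i_s)$; repeated indices in $\{1,2\}$ are summed. The total derivatives are the vector fields along $\mathcal F^{k+1}_{(2)}E\to\mathcal F^k_{(2)}E$ given by $\mathbf T_i=\sum_{s=0}^k \frac{1}{\#(i_1\cdots i_s)}u^\alpha_{i i_1\cdots i_s}\,\partial/\partial u^\alpha_{i_1\cdots i_s}$, and the vertical endomorphisms are the type $(1,1)$ tensor fields on $\mathcal F^{k+1}_{(2)}E$ given by $S^j=\sum_{s=0}^k \frac{s+1}{\#(i_1\cdots i_s)}\,\partial/\partial u^\alpha_{j i_1\cdots i_s}\otimes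 du^\alpha_{i_1\cdots i_s}$. The $S^i$ commute and $S^{i_1\cdots i_s}$ denotes their composite. On forms, $S^i$ acts as the degree-zero derivation $(S^i\omega)(X_1,\dots,X_r)=\sum_a \omega(X_1,\dots,S^iX_a,\dots,X_r)$ (zero on functions). The fundamental vector fields are $\Delta^{i_1\cdots i_s}_i=S^{i_1\cdots i_s}(\mathbf T_i)$, well-defined vector fields on $\mathcal F^{k+1}_{(2)}E$. Contraction with $\mathbf T_i$ and with $\Delta^{i_1\cdots i_s}_i$ is denoted $i_i$ and $i^{i_1\cdots i_s}_i$; the corresponding Lie derivatives are $d_i=d\,i_i+i_i\,d$ and $d^{i_1\cdots i_s}_i=d\,i^{i_1\cdots i_s}_i+i^{i_1\cdots i_s}_i d$. The $d_i$ commute and $d_{j_1\cdots j_s}$ denotes their composite. A second-order Lagrangian is a smooth function $L$ on (an open subset of) $\mathcal F^2_{(2)}E$; it is homogeneous if $d^i_jL=\delta^i_jL$ and $d^{ik}_jL=0$ for all $i,j,k$. Its Hilbert forms are the 1-forms $\vartheta^i=(S^i-\tfrac12 d_jS^{ji})\,dL$ on $\mathcal F^3_{(2)}E$. Define the operators $P^i_{(1)}=\tfrac14 S^i-\tfrac1{24}d_jS^{ji}+\tfrac1{192}d_{jk}S^{jki}$, mapping 2-forms on $\mathcal F^3_{(2)}E$ to 2-forms on $\mathcal F^5_{(2)}E$. The fundamental form of $L$ is the 2-form $\Theta=P^2_{(1)}d\vartheta^1-P^1_{(1)}d\vartheta^2$ on $\mathcal F^5_{(2)}E$. *)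

theory Defs
  imports "HOL-Analysis.Analysis" "HOL-Library.Groups_Big_Fun"
begin

text \<open>E is represented by one chart with coordinates u^alpha,
  alpha ranging over a finite type 'a (so n = CARD('a)).  A symmetric multi-index
  (i_1 ... i_s) with entries in {1,2} is determined by the pair (p,q) = (number of 1's,
  number of 2's), so the induced coordinate u^alpha_(i_1...i_s) is indexed by (alpha,(p,q)),
  of order p+q.  Since pull-backs along the projections are omitted in the paper, we work
  with points carrying coordinates of all orders; an object "on F^k" is one that only
  involves coordinates of order at most k.\<close>

type_synonym 'a idx = "'a \<times> (nat \<times> nat)"
type_synonym 'a pt = "'a idx \<Rightarrow> real"
text \<open>r-forms: a function of lists of coordinate indices of length r giving the component
  omega(d/du_{m1},...,d/du_{mr}); values on lists of other length are zero.\<close>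
type_synonym 'a form = "'a idx list \<Rightarrow> 'a pt \<Rightarrow> real"
type_synonym 'a vf = "'a idx \<Rightarrow> 'a pt \<Rightarrow> real"

definition jord :: "'a idx \<Rightarrow> nat" where
  "jord m = fst (snd m) + snd (snd m)"

text \<open>appending the index j (j = 1 or 2) to a multi-index\<close>
definition sh :: "nat \<Rightarrow> nat \<times> nat \<Rightarrow> nat \<times> nat" where
  "sh j pq = (if j = 1 then (Suc (fst pq), snd pq) else (fst pq, Suc (snd pq)))"

definition agree_upto :: "nat \<Rightarrow> 'a pt \<Rightarrow> 'a pt \<Rightarrow> bool" where
  "agree_upto k x y \<longleftrightarrow> (\<forall>m. jord m \<le> k \<longrightarrow> x m = y m)"

definition pd :: "'a idx \<Rightarrow> ('a pt \<Rightarrow> real) \<Rightarrow> 'a pt \<Rightarrow> real" where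
  "pd i f x = deriv (\<lambda>t. f (x(i := t))) (x i)"

fun ipd :: "'a idx list \<Rightarrow> ('a pt \<Rightarrow> real) \<Rightarrow> 'a pt \<Rightarrow> real" where
  "ipd [] f = f"
| "ipd (i # is) f = pd i (ipd is f)"

definition smooth_on :: "'a pt set \<Rightarrow> ('a pt \<Rightarrow> real) \<Rightarrow> bool" where
  "smooth_on U f \<longleftrightarrow> (\<forall>is. continuous_on U (ipd is f) \<and>
      (\<forall>x\<in>U. \<forall>i. (\<lambda>t. ipd is f (x(i := t))) differentiable (at (x i))))"

text \<open>a function on (an open subset U of) F^k_(2)E\<close>
definition fun_on :: "nat \<Rightarrow> ('a pt \<Rightarrow> real) \<Rightarrow> bool" where
  "fun_on k f \<longleftrightarrow> (\<forall>x y. agree_upto k x y \<longrightarrow> f x = f y)"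

text \<open>an open subset of F^k_(2)E (regular 2-velocities: rank 2 at order 1)\<close>
definition open_in_frames :: "nat \<Rightarrow> 'a pt set \<Rightarrow> bool" where
  "open_in_frames k U \<longleftrightarrow> open U \<and>
     (\<forall>x y. agree_upto k x y \<longrightarrow> (x \<in> U \<longleftrightarrow> y \<in> U)) \<and>
     (\<forall>x\<in>U. \<forall>a b. (\<forall>\<alpha>. a * x (\<alpha>, (1,0)) + b * x (\<alpha>, (0,1)) = 0) \<longrightarrow> a = 0 \<and> b = 0)"

definition fn0 :: "('a pt \<Rightarrow> real) \<Rightarrow> 'a form" where
  "fn0 f = (\<lambda>is x. if is = [] then f x else 0)"

definition dform :: "'a form \<Rightarrow> 'a form" where
  "dform \<omega> = (\<lambda>is x. \<Sum>j<length is. (-1) ^ j * pd (is ! j) (\<omega> (take j is @ drop (Suc j) is)) x)"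

definition ctr :: "'a vf \<Rightarrow> 'a form \<Rightarrow> 'a form" where
  "ctr X \<omega> = (\<lambda>is x. Sum_any (\<lambda>m. X m x * \<omega> (m # is) x))"

definition lie :: "'a vf \<Rightarrow> 'a form \<Rightarrow> 'a form" where
  "lie X \<omega> = (\<lambda>is x. dform (ctr X \<omega>) is x + ctr X (dform \<omega>) is x)"

text \<open>total derivative T_i: component along d/du^alpha_(i_1..i_s) is u^alpha_(i i_1..i_s)
  (the sum over sequences with weight 1/# collapses to one term per multi-index)\<close>
definition Tvf :: "nat \<Rightarrow> 'a vf" where
  "Tvf i = (\<lambda>m x. x (fst m, sh i (snd m)))"

text \<open>vertical endomorphism S^j: S^j(d/du_n) = (|n|+1) d/du_{n+j};
  Smat j m n is the component of S^j(d/du_n) along d/du_m\<close>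
definition Smat :: "nat \<Rightarrow> 'a idx \<Rightarrow> 'a idx \<Rightarrow> real" where
  "Smat j m n = (if fst m = fst n \<and> snd m = sh j (snd n) then real (jord n + 1) else 0)"

definition Svf :: "nat \<Rightarrow> 'a vf \<Rightarrow> 'a vf" where
  "Svf j X = (\<lambda>m x. Sum_any (\<lambda>n. Smat j m n * X n x))"

text \<open>S^j acting on forms as the degree-zero derivation\<close>
definition Sform :: "nat \<Rightarrow> 'a form \<Rightarrow> 'a form" where
  "Sform j \<omega> = (\<lambda>is x. \<Sum>a<length is. Sum_any (\<lambda>m. Smat j m (is ! a) * \<omega> (is[a := m]) x))"

definition Delta1 :: "nat \<Rightarrow> nat \<Rightarrow> 'a vf" where
  "Delta1 i j = Svf i (Tvf j)"
definition Delta2 :: "nat \<Rightarrow> nat \<Rightarrow> nat \<Rightarrow> 'a vf" where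
  "Delta2 i k j = Svf i (Svf k (Tvf j))"

definition homogeneous :: "'a pt set \<Rightarrow> ('a pt \<Rightarrow> real) \<Rightarrow> bool" where
  "homogeneous U L \<longleftrightarrow>
     (\<forall>i\<in>{1,2}. \<forall>j\<in>{1,2}. \<forall>x\<in>U. lie (Delta1 i j) (fn0 L) [] x = (if i = j then L x else 0)) \<and>
     (\<forall>i\<in>{1,2}. \<forall>k\<in>{1,2}. \<forall>j\<in>{1,2}. \<forall>x\<in>U. lie (Delta2 i k j) (fn0 L) [] x = 0)"

definition hilbert :: "('a pt \<Rightarrow> real) \<Rightarrow> nat \<Rightarrow> 'a form" where
  "hilbert L i = (\<lambda>is x. Sform i (dform (fn0 L)) is x
      - 1/2 * (\<Sum>j\<in>{1,2}. lie (Tvf j) (Sform j (Sform i (dform (fn0 L)))) is x))"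

definition Pop :: "nat \<Rightarrow> 'a form \<Rightarrow> 'a form" where
  "Pop i \<omega> = (\<lambda>is x. 1/4 * Sform i \<omega> is x
      - 1/24 * (\<Sum>j\<in>{1,2}. lie (Tvf j) (Sform j (Sform i \<omega>)) is x)
      + 1/192 * (\<Sum>j\<in>{1,2}. \<Sum>k\<in>{1,2}.
           lie (Tvf j) (lie (Tvf k) (Sform j (Sform k (Sform i \<omega>)))) is x))"

definition fundamental_form :: "('a pt \<Rightarrow> real) \<Rightarrow> 'a form" where
  "fundamental_form L = (\<lambda>is x. Pop 2 (dform (hilbert L 1)) is x - Pop 1 (dform (hilbert L 2)) is x)"

text \<open>omega (on U) is the pull-back of a form on F^k: only d u of order <= k occur and
  the coefficients depend only on coordinates of order <= k\<close>
definition projectable_to :: "nat \<Rightarrow> 'a pt set \<Rightarrow> 'a form \<Rightarrow> bool" where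
  "projectable_to k U \<omega> \<longleftrightarrow>
     (\<forall>x\<in>U. \<forall>is. (\<exists>m\<in>set is. jord m > k) \<longrightarrow> \<omega> is x = 0) \<and>
     (\<forall>x\<in>U. \<forall>y. agree_upto k x y \<longrightarrow> (\<forall>is. \<omega> is x = \<omega> is y))"

definition horizontal_over :: "nat \<Rightarrow> nat \<Rightarrow> 'a pt set \<Rightarrow> 'a form \<Rightarrow> bool" where
  "horizontal_over k l U \<omega> \<longleftrightarrow>
     (\<forall>X::'a vf. (\<forall>m x. (jord m \<le> k \<or> jord m > l) \<longrightarrow> X m x = 0) \<longrightarrow>
        (\<forall>x\<in>U. \<forall>is. ctr X \<omega> is x = 0))"

end

theory Submission
  imports Defs
begin

(* Give the coordinate u^alpha_I the order |I| and a list of coordinates the weight sum |I|;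
   a form has weight at most s if its components on lists of weight > s vanish.  S^j lowers
   this bound by one; the total derivative d_j raises it by one and raises by one the order of
   the coordinates the coefficients depend on; d raises it by at most the order of the
   coordinates the coefficients depend on.  Thus dL has weight 2 with coefficients on F^2, and
   vartheta^i has weight 1 with coefficients on F^3, those of weight 1 even on F^2, so that
   d vartheta^i has weight 3.  Each term of P^i_(1) has one more S than d_j, so Theta has
   weight 2: only du of order at most 2 occur in it, which is horizontality over F^2.  The
   naive count puts the coefficients of Theta on F^5; it improves to F^4 because the term
   d_{jk} S^{jki} only sees the weight-3 components of d vartheta^i, which live on F^2. *)

lemma ipd_append: "ipd (is @ js) f = ipd is (ipd js f)"
  by (induction "is") auto

lemma pd_const: "pd i (\<lambda>_. c) = (\<lambda>_. 0)"
  by (simp add: pd_def fun_eq_iff)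

lemma ipd_Cons_const: "ipd (i # is) (\<lambda>_. c) = (\<lambda>_. 0)"
  by (induction "is" arbitrary: i) (simp_all only: ipd.simps pd_const)

lemma pd_coord: "pd i (\<lambda>x. x m) = (\<lambda>x. if i = m then 1 else 0)"
  by (auto simp: pd_def fun_eq_iff)

lemma ipd_coord_cases: "ipd is (\<lambda>x. x m) = (\<lambda>x. x m) \<or> (\<exists>c. ipd is (\<lambda>x. x m) = (\<lambda>_. c))"
proof (induction "is")
  case (Cons a "is")
  then show ?case by (auto simp: pd_coord pd_const)
qed simp

lemma agree_upto_mono: "agree_upto k x y \<Longrightarrow> j \<le> k \<Longrightarrow> agree_upto j x y"
  unfolding agree_upto_def by auto

definition weight :: "'a idx list \<Rightarrow> nat" where
  "weight is = sum_list (map jord is)"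

definition raise_idx :: "nat \<Rightarrow> 'a idx \<Rightarrow> 'a idx" where
  "raise_idx j n = (fst n, sh j (snd n))"

definition lowerable :: "nat \<Rightarrow> 'a idx \<Rightarrow> bool" where
  "lowerable j c \<longleftrightarrow> (if j = 1 then 0 < fst (snd c) else 0 < snd (snd c))"

definition lower_idx :: "nat \<Rightarrow> 'a idx \<Rightarrow> 'a idx" where
  "lower_idx j c = (fst c, if j = 1 then (fst (snd c) - 1, snd (snd c)) else (fst (snd c), snd (snd c) - 1))"

definition drop_nth :: "nat \<Rightarrow> 'b list \<Rightarrow> 'b list" where
  "drop_nth p xs = take p xs @ drop (Suc p) xs"

definition idx_upto :: "nat \<Rightarrow> 'a idx set" where
  "idx_upto N = {m. jord m \<le> N}"

lemma jord_raise_idx: "jord (raise_idx j n) = Suc (jord n)"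
  by (simp add: raise_idx_def jord_def sh_def)

lemma raise_idx_eq_iff: "c = raise_idx j m \<longleftrightarrow> lowerable j c \<and> m = lower_idx j c"
  by (cases c; cases m) (auto simp: raise_idx_def sh_def lowerable_def lower_idx_def)

lemma jord_lower_idx: "lowerable j c \<Longrightarrow> Suc (jord (lower_idx j c)) = jord c"
  by (cases c) (auto simp: lowerable_def lower_idx_def jord_def)

lemma finite_idx_upto: "finite (idx_upto N :: ('a::finite) idx set)"
proof (rule finite_subset)
  show "idx_upto N \<subseteq> UNIV \<times> ({..N} \<times> {..N})" by (auto simp: idx_upto_def jord_def)
qed auto

lemma weight_Cons: "weight (m # xs) = jord m + weight xs"
  by (simp add: weight_def)

lemma jord_le_weight: "m \<in> set is \<Longrightarrow> jord m \<le> weight is"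
  unfolding weight_def by (simp add: member_le_sum_list)

lemma weight_list_update: "a < length is \<Longrightarrow> weight (is[a := m]) + jord (is ! a) = weight is + jord m"
proof (induction "is" arbitrary: a)
  case (Cons b "is") then show ?case by (cases a) (auto simp: weight_def)
qed simp

lemma weight_raise_nth: "a < length is \<Longrightarrow> weight (is[a := raise_idx j (is ! a)]) = Suc (weight is)"
  using weight_list_update[of a "is" "raise_idx j (is ! a)"] by (simp add: jord_raise_idx)

lemma weight_drop_nth: "p < length xs \<Longrightarrow> weight (drop_nth p xs) + jord (xs ! p) = weight xs"
  by (subst (3) id_take_nth_drop[of p xs]) (simp_all add: weight_def drop_nth_def)

lemma weight_lower_drop_nth:
  "p < length xs \<Longrightarrow> lowerable j (xs ! p) \<Longrightarrow> Suc (weight (lower_idx j (xs ! p) # drop_nth p xs)) = weight xs"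
  using weight_drop_nth[of p xs] jord_lower_idx[of j "xs ! p"] by (simp add: weight_Cons)

lemma sum_list_concat_map_pairs:
  "(\<Sum>p\<leftarrow>concat (map (\<lambda>p. [F p, G p]) ps). fst p x * snd p x) =
    (\<Sum>p\<leftarrow>ps. fst (F p) x * snd (F p) x + fst (G p) x * snd (G p) x)"
  by (induction ps) (auto simp: add.assoc)

lemma Smat_eq: "Smat j m n = (if m = raise_idx j n then real (jord n + 1) else 0)"
  by (cases m; cases n) (auto simp: Smat_def raise_idx_def)

lemma Sform_eq:
  "Sform j \<omega> is x = (\<Sum>a<length is. real (jord (is ! a) + 1) * \<omega> (is[a := raise_idx j (is ! a)]) x)"
proof -
  have "Sum_any (\<lambda>m. Smat j m (is ! a) * \<omega> (is[a := m]) x)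
      = real (jord (is ! a) + 1) * \<omega> (is[a := raise_idx j (is ! a)]) x" for a
  proof -
    have "Sum_any (\<lambda>m. Smat j m (is ! a) * \<omega> (is[a := m]) x)
        = Sum_any (\<lambda>m. if m = raise_idx j (is ! a) then real (jord (is ! a) + 1) * \<omega> (is[a := m]) x else 0)"
      by (intro arg_cong[where f = Sum_any] ext) (simp add: Smat_eq)
    then show ?thesis by simp
  qed
  then show ?thesis unfolding Sform_def by simp
qed

lemma dform_eq: "dform \<omega> is x = (\<Sum>p<length is. (-1) ^ p * pd (is ! p) (\<omega> (drop_nth p is)) x)"
  by (simp add: dform_def drop_nth_def)

lemma dform_Cons:
  "dform \<omega> (m # is) x = pd m (\<omega> is) x - (\<Sum>p<length is. (-1) ^ p * pd (is ! p) (\<omega> (m # drop_nth p is)) x)"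
proof -
  have "dform \<omega> (m # is) x = pd m (\<omega> is) x + (\<Sum>p<length is. (-1) ^ Suc p * pd (is ! p) (\<omega> (m # drop_nth p is)) x)"
    unfolding dform_eq length_Cons by (subst sum.lessThan_Suc_shift) (simp add: drop_nth_def)
  then show ?thesis by (simp add: sum_negf)
qed

section \<open>Calculus on a saturated open domain\<close>

locale frame_domain =
  fixes U :: "('a::finite) pt set"
  assumes open_U: "open U"
    and saturated: "\<And>x y. agree_upto 2 x y \<Longrightarrow> x \<in> U \<longleftrightarrow> y \<in> U"
begin

lemma eventually_line_in_U:
  assumes "x \<in> U"
  shows "eventually (\<lambda>t. x(i := t) \<in> U) (nhds (x i))"
proof -
  have "continuous_on UNIV (\<lambda>t::real. x(i := t))"
  proof (intro continuous_on_coordinatewise_then_product)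
    fix j show "continuous_on UNIV (\<lambda>t::real. (x(i := t)) j)"
      by (cases "j = i") (simp_all add: continuous_on_id continuous_on_const)
  qed
  then have "open ((\<lambda>t::real. x(i := t)) -` U)"
    by (intro continuous_open_vimage[OF open_U]) (simp add: continuous_on_eq_continuous_at)
  then have "open {t. x(i := t) \<in> U}"
    by (simp add: vimage_def)
  then show ?thesis using assms eventually_nhds_in_open by fastforce
qed

lemma saturated_upto: "2 \<le> k \<Longrightarrow> agree_upto k x y \<Longrightarrow> x \<in> U \<Longrightarrow> y \<in> U"
  using saturated agree_upto_mono by blast

definition eq_on_U :: "('a pt \<Rightarrow> real) \<Rightarrow> ('a pt \<Rightarrow> real) \<Rightarrow> bool" where
  "eq_on_U f g \<longleftrightarrow> (\<forall>x\<in>U. f x = g x)"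

definition coord_differentiable :: "('a pt \<Rightarrow> real) \<Rightarrow> bool" where
  "coord_differentiable f \<longleftrightarrow> (\<forall>x\<in>U. \<forall>i. (\<lambda>t. f (x(i := t))) differentiable (at (x i)))"

definition coord_smooth :: "('a pt \<Rightarrow> real) \<Rightarrow> bool" where
  "coord_smooth f \<longleftrightarrow> (\<forall>is. coord_differentiable (ipd is f))"

lemma eq_on_U_sym: "eq_on_U f g \<Longrightarrow> eq_on_U g f"
  unfolding eq_on_U_def by simp

lemma eventually_eq_on_line:
  "eq_on_U f g \<Longrightarrow> x \<in> U \<Longrightarrow> eventually (\<lambda>t. f (x(i := t)) = g (x(i := t))) (nhds (x i))"
  using eventually_line_in_U[of x i] unfolding eq_on_U_def by (auto elim: eventually_mono)

lemma pd_cong: "eq_on_U f g \<Longrightarrow> x \<in> U \<Longrightarrow> pd i f x = pd i g x"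
  unfolding pd_def by (rule deriv_cong_ev[OF eventually_eq_on_line]) auto

lemma pd_eq_0: "eq_on_U f (\<lambda>_. 0) \<Longrightarrow> x \<in> U \<Longrightarrow> pd i f x = 0"
  using pd_cong[of f "\<lambda>_. 0" x i] by (simp add: pd_const)

lemma coord_differentiable_has_derivative:
  "coord_differentiable f \<Longrightarrow> x \<in> U \<Longrightarrow> ((\<lambda>t. f (x(i := t))) has_real_derivative pd i f x) (at (x i))"
  unfolding coord_differentiable_def pd_def DERIV_deriv_iff_real_differentiable by blast

lemma coord_differentiable_cong:
  assumes "eq_on_U f g" "coord_differentiable f"
  shows "coord_differentiable g"
  unfolding coord_differentiable_def
proof (intro ballI allI)
  fix x i assume "x \<in> U"
  then have "((\<lambda>t. g (x(i := t))) has_real_derivative pd i f x) (at (x i))"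
    using DERIV_cong_ev[OF refl eventually_eq_on_line[OF assms(1)] refl]
      coord_differentiable_has_derivative[OF assms(2)] by blast
  then show "(\<lambda>t. g (x(i := t))) differentiable (at (x i))"
    using real_differentiable_def by blast
qed

lemma coord_differentiable_const: "coord_differentiable (\<lambda>_. c)"
  unfolding coord_differentiable_def by auto

lemma coord_differentiable_coord: "coord_differentiable (\<lambda>x. x m)"
  unfolding coord_differentiable_def
proof (intro ballI allI)
  fix x :: "'a pt" and i
  show "(\<lambda>t. (x(i := t)) m) differentiable (at (x i))" by (cases "i = m") auto
qed

lemma coord_differentiable_add:
  "coord_differentiable f \<Longrightarrow> coord_differentiable g \<Longrightarrow> coord_differentiable (\<lambda>x. f x + g x)"
  unfolding coord_differentiable_def by auto

lemma coord_differentiable_mult: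
  "coord_differentiable f \<Longrightarrow> coord_differentiable g \<Longrightarrow> coord_differentiable (\<lambda>x. f x * g x)"
  unfolding coord_differentiable_def by auto

lemma coord_differentiable_sum:
  "finite A \<Longrightarrow> (\<And>a. a \<in> A \<Longrightarrow> coord_differentiable (F a)) \<Longrightarrow> coord_differentiable (\<lambda>x. \<Sum>a\<in>A. F a x)"
  by (induction A rule: finite_induct) (auto simp: coord_differentiable_const coord_differentiable_add)

lemma pd_add:
  assumes "coord_differentiable f" "coord_differentiable g" "x \<in> U"
  shows "pd i (\<lambda>x. f x + g x) x = pd i f x + pd i g x"
proof -
  have "((\<lambda>t. f (x(i := t)) + g (x(i := t))) has_real_derivative pd i f x + pd i g x) (at (x i))"
    using coord_differentiable_has_derivative[OF assms(1,3)] coord_differentiable_has_derivative[OF assms(2,3)]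
    by (intro derivative_intros)
  then show ?thesis unfolding pd_def by (rule DERIV_imp_deriv)
qed

lemma pd_mult:
  assumes "coord_differentiable f" "coord_differentiable g" "x \<in> U"
  shows "pd i (\<lambda>x. f x * g x) x = pd i f x * g x + f x * pd i g x"
proof -
  have "((\<lambda>t. f (x(i := t)) * g (x(i := t))) has_real_derivative
      pd i f x * g (x(i := x i)) + pd i g x * f (x(i := x i))) (at (x i))"
    using coord_differentiable_has_derivative[OF assms(1,3)] coord_differentiable_has_derivative[OF assms(2,3)]
    by (intro derivative_intros)
  then show ?thesis unfolding pd_def by (simp add: DERIV_imp_deriv algebra_simps)
qed

lemma pd_cmult: "coord_differentiable f \<Longrightarrow> x \<in> U \<Longrightarrow> pd i (\<lambda>x. c * f x) x = c * pd i f x"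
  using pd_mult[OF coord_differentiable_const, of f x i c] by (simp add: pd_const)

lemma pd_diff:
  "coord_differentiable f \<Longrightarrow> coord_differentiable g \<Longrightarrow> x \<in> U \<Longrightarrow> pd i (\<lambda>x. f x - g x) x = pd i f x - pd i g x"
  using pd_add[of f "\<lambda>x. (-1) * g x" x i] pd_cmult[of g x i "-1"]
    coord_differentiable_mult[OF coord_differentiable_const, of g "-1"]
  by simp

lemma pd_sum:
  "finite A \<Longrightarrow> (\<And>a. a \<in> A \<Longrightarrow> coord_differentiable (F a)) \<Longrightarrow> x \<in> U \<Longrightarrow>
    pd i (\<lambda>x. \<Sum>a\<in>A. F a x) x = (\<Sum>a\<in>A. pd i (F a) x)"
proof (induction A rule: finite_induct)
  case (insert a A)
  then have "pd i (\<lambda>x. F a x + (\<Sum>a\<in>A. F a x)) x = pd i (F a) x + pd i (\<lambda>x. \<Sum>a\<in>A. F a x) x"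
    by (intro pd_add coord_differentiable_sum) auto
  with insert show ?case by simp
qed (simp add: pd_const)

lemma coord_smooth_differentiable: "coord_smooth f \<Longrightarrow> coord_differentiable f"
  unfolding coord_smooth_def by (metis ipd.simps(1))

lemma coord_smooth_pd: "coord_smooth f \<Longrightarrow> coord_smooth (pd i f)"
  unfolding coord_smooth_def by (metis ipd_append ipd.simps)

lemma coord_smooth_const: "coord_smooth (\<lambda>_. c)"
  unfolding coord_smooth_def
proof
  fix "is" show "coord_differentiable (ipd is (\<lambda>_. c))"
    by (cases "is") (simp_all only: ipd_Cons_const coord_differentiable_const ipd.simps(1))
qed

lemma coord_smooth_coord: "coord_smooth (\<lambda>x. x m)"
  unfolding coord_smooth_def
proof
  fix "is" show "coord_differentiable (ipd is (\<lambda>x. x m))"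
    using ipd_coord_cases[of "is" m] coord_differentiable_coord coord_differentiable_const by metis
qed

text \<open>Closure of smoothness under products: by the Leibniz rule, the functions that agree on U
  with a finite sum of products of smooth functions form a class closed under partial derivatives.\<close>

definition sums_of_products :: "('a pt \<Rightarrow> real) set" where
  "sums_of_products = {h. \<exists>ps. (\<forall>p\<in>set ps. coord_smooth (fst p) \<and> coord_smooth (snd p)) \<and>
      eq_on_U h (\<lambda>x. \<Sum>p\<leftarrow>ps. fst p x * snd p x)}"

lemma coord_differentiable_sum_list_prod:
  "\<forall>p\<in>set ps. coord_differentiable (fst p) \<and> coord_differentiable (snd p) \<Longrightarrow>
    coord_differentiable (\<lambda>x. \<Sum>p\<leftarrow>ps. fst p x * snd p x)"
  by (induction ps) (simp_all add: coord_differentiable_const coord_differentiable_add coord_differentiable_mult)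

lemma pd_sum_list_prod:
  "\<forall>p\<in>set ps. coord_differentiable (fst p) \<and> coord_differentiable (snd p) \<Longrightarrow> x \<in> U \<Longrightarrow>
    pd i (\<lambda>x. \<Sum>p\<leftarrow>ps. fst p x * snd p x) x = (\<Sum>p\<leftarrow>ps. pd i (fst p) x * snd p x + fst p x * pd i (snd p) x)"
proof (induction ps)
  case (Cons a ps)
  then have "pd i (\<lambda>x. fst a x * snd a x + (\<Sum>p\<leftarrow>ps. fst p x * snd p x)) x
      = pd i (\<lambda>x. fst a x * snd a x) x + pd i (\<lambda>x. \<Sum>p\<leftarrow>ps. fst p x * snd p x) x"
    by (intro pd_add) (auto intro: coord_differentiable_mult coord_differentiable_sum_list_prod)
  with Cons show ?case by (simp add: pd_mult)
qed (simp add: pd_const)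

lemma sums_of_products_pd:
  assumes "h \<in> sums_of_products"
  shows "pd i h \<in> sums_of_products"
proof -
  obtain ps where smooth: "\<forall>p\<in>set ps. coord_smooth (fst p) \<and> coord_smooth (snd p)"
    and h: "eq_on_U h (\<lambda>x. \<Sum>p\<leftarrow>ps. fst p x * snd p x)"
    using assms unfolding sums_of_products_def by blast
  define qs where "qs = concat (map (\<lambda>p. [(pd i (fst p), snd p), (fst p, pd i (snd p))]) ps)"
  have "eq_on_U (pd i h) (\<lambda>x. \<Sum>p\<leftarrow>qs. fst p x * snd p x)"
    unfolding eq_on_U_def
  proof
    fix x assume x: "x \<in> U"
    have "pd i h x = pd i (\<lambda>x. \<Sum>p\<leftarrow>ps. fst p x * snd p x) x"
      using pd_cong[OF h x] .
    also have "\<dots> = (\<Sum>p\<leftarrow>ps. pd i (fst p) x * snd p x + fst p x * pd i (snd p) x)"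
      using smooth x by (intro pd_sum_list_prod) (auto intro: coord_smooth_differentiable)
    also have "\<dots> = (\<Sum>p\<leftarrow>qs. fst p x * snd p x)"
      unfolding qs_def sum_list_concat_map_pairs by simp
    finally show "pd i h x = (\<Sum>p\<leftarrow>qs. fst p x * snd p x)" .
  qed
  moreover have "\<forall>p\<in>set qs. coord_smooth (fst p) \<and> coord_smooth (snd p)"
    using smooth by (auto simp: qs_def coord_smooth_pd)
  ultimately show ?thesis unfolding sums_of_products_def by blast
qed

lemma sums_of_products_smooth:
  assumes "h \<in> sums_of_products"
  shows "coord_smooth h"
proof -
  have "ipd is h \<in> sums_of_products" for "is"
    by (induction "is") (simp_all add: assms sums_of_products_pd)
  moreover have "coord_differentiable g" if g: "g \<in> sums_of_products" for g
  proof -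
    obtain ps where "\<forall>p\<in>set ps. coord_smooth (fst p) \<and> coord_smooth (snd p)"
      and g: "eq_on_U g (\<lambda>x. \<Sum>p\<leftarrow>ps. fst p x * snd p x)"
      using g unfolding sums_of_products_def by blast
    then have "coord_differentiable (\<lambda>x. \<Sum>p\<leftarrow>ps. fst p x * snd p x)"
      by (intro coord_differentiable_sum_list_prod) (simp add: coord_smooth_differentiable)
    then show ?thesis using coord_differentiable_cong[OF eq_on_U_sym[OF g]] by blast
  qed
  ultimately show ?thesis unfolding coord_smooth_def by blast
qed

lemma coord_smooth_mult: "coord_smooth f \<Longrightarrow> coord_smooth g \<Longrightarrow> coord_smooth (\<lambda>x. f x * g x)"
  by (rule sums_of_products_smooth) (auto simp: sums_of_products_def eq_on_U_def intro!: exI[of _ "[(f, g)]"])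

lemma coord_smooth_add: "coord_smooth f \<Longrightarrow> coord_smooth g \<Longrightarrow> coord_smooth (\<lambda>x. f x + g x)"
  by (rule sums_of_products_smooth)
    (auto simp: sums_of_products_def eq_on_U_def coord_smooth_const intro!: exI[of _ "[(f, \<lambda>_. 1), (\<lambda>_. 1, g)]"])

lemma coord_smooth_cong: "coord_smooth f \<Longrightarrow> eq_on_U f g \<Longrightarrow> coord_smooth g"
  by (rule sums_of_products_smooth)
    (auto simp: sums_of_products_def eq_on_U_def coord_smooth_const intro!: exI[of _ "[(f, \<lambda>_. 1)]"])

lemma coord_smooth_cmult: "coord_smooth f \<Longrightarrow> coord_smooth (\<lambda>x. c * f x)"
  using coord_smooth_mult[OF coord_smooth_const] by blast

lemma coord_smooth_diff: "coord_smooth f \<Longrightarrow> coord_smooth g \<Longrightarrow> coord_smooth (\<lambda>x. f x - g x)"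
  using coord_smooth_add[of f "\<lambda>x. (-1) * g x"] coord_smooth_cmult[of g "-1"] by simp

lemma coord_smooth_sum:
  "finite A \<Longrightarrow> (\<And>a. a \<in> A \<Longrightarrow> coord_smooth (F a)) \<Longrightarrow> coord_smooth (\<lambda>x. \<Sum>a\<in>A. F a x)"
  by (induction A rule: finite_induct) (auto simp: coord_smooth_const coord_smooth_add)

lemma coord_smooth_if: "coord_smooth f \<Longrightarrow> coord_smooth (\<lambda>x. if P then f x else 0)"
  by (cases P) (simp_all add: coord_smooth_const)

definition depends_upto :: "nat \<Rightarrow> ('a pt \<Rightarrow> real) \<Rightarrow> bool" where
  "depends_upto k f \<longleftrightarrow> (\<forall>x\<in>U. \<forall>y. agree_upto k x y \<longrightarrow> f x = f y)"

lemma pd_eq_0_if_depends_upto: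
  assumes "depends_upto k f" "k < jord i" "x \<in> U"
  shows "pd i f x = 0"
proof -
  have "f (x(i := t)) = f x" for t
    using assms unfolding depends_upto_def agree_upto_def by (metis fun_upd_other not_le)
  then show ?thesis by (simp add: pd_def)
qed

lemma depends_upto_pd:
  assumes k: "2 \<le> k" and f: "depends_upto k f"
  shows "depends_upto k (pd i f)"
  unfolding depends_upto_def
proof (intro ballI allI impI)
  fix x y assume x: "x \<in> U" and xy: "agree_upto k x y"
  have y: "y \<in> U" using saturated_upto[OF k xy x] .
  show "pd i f x = pd i f y"
  proof (cases "k < jord i")
    case True then show ?thesis using pd_eq_0_if_depends_upto[OF f True] x y by simp
  next
    case False
    then have "jord i \<le> k" by simp
    then have xi: "x i = y i" using xy unfolding agree_upto_def by blast
    have "eventually (\<lambda>t. f (x(i := t)) = f (y(i := t))) (nhds (x i))"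
      using eventually_line_in_U[OF x, of i]
    proof (rule eventually_mono)
      fix t assume "x(i := t) \<in> U"
      moreover have "agree_upto k (x(i := t)) (y(i := t))" using xy unfolding agree_upto_def by auto
      ultimately show "f (x(i := t)) = f (y(i := t))" using f unfolding depends_upto_def by blast
    qed
    then show ?thesis unfolding pd_def by (rule deriv_cong_ev) (simp add: xi)
  qed
qed

lemma depends_upto_const: "depends_upto k (\<lambda>_. c)"
  by (simp add: depends_upto_def)

lemma depends_upto_coord: "jord m \<le> k \<Longrightarrow> depends_upto k (\<lambda>x. x m)"
  unfolding depends_upto_def agree_upto_def by blast

lemma depends_upto_add: "depends_upto k f \<Longrightarrow> depends_upto k g \<Longrightarrow> depends_upto k (\<lambda>x. f x + g x)"
  by (simp add: depends_upto_def)

lemma depends_upto_diff: "depends_upto k f \<Longrightarrow> depends_upto k g \<Longrightarrow> depends_upto k (\<lambda>x. f x - g x)"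
  by (simp add: depends_upto_def)

lemma depends_upto_mult: "depends_upto k f \<Longrightarrow> depends_upto k g \<Longrightarrow> depends_upto k (\<lambda>x. f x * g x)"
  by (simp add: depends_upto_def)

lemma depends_upto_cmult: "depends_upto k f \<Longrightarrow> depends_upto k (\<lambda>x. c * f x)"
  by (simp add: depends_upto_def)

lemma depends_upto_if: "depends_upto k f \<Longrightarrow> depends_upto k (\<lambda>x. if P then f x else 0)"
  by (cases P) (simp_all add: depends_upto_const)

lemma depends_upto_sum:
  "finite A \<Longrightarrow> (\<And>a. a \<in> A \<Longrightarrow> depends_upto k (F a)) \<Longrightarrow> depends_upto k (\<lambda>x. \<Sum>a\<in>A. F a x)"
  by (induction A rule: finite_induct) (auto simp: depends_upto_const depends_upto_add)

lemma depends_upto_mono: "depends_upto j f \<Longrightarrow> j \<le> k \<Longrightarrow> depends_upto k f"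
  unfolding depends_upto_def using agree_upto_mono by blast

lemma depends_upto_cong: "2 \<le> k \<Longrightarrow> depends_upto k f \<Longrightarrow> eq_on_U f g \<Longrightarrow> depends_upto k g"
  unfolding depends_upto_def eq_on_U_def using saturated_upto by metis

lemma depends_upto_if_eq_0: "2 \<le> k \<Longrightarrow> eq_on_U f (\<lambda>_. 0) \<Longrightarrow> depends_upto k f"
  using depends_upto_cong[OF _ depends_upto_const] eq_on_U_sym by blast

section \<open>Weight bounds for forms\<close>

definition smooth_form :: "'a form \<Rightarrow> bool" where
  "smooth_form \<omega> \<longleftrightarrow> (\<forall>is. coord_smooth (\<omega> is))"

definition weight_bounded :: "nat \<Rightarrow> 'a form \<Rightarrow> bool" where
  "weight_bounded s \<omega> \<longleftrightarrow> (\<forall>is. \<forall>x\<in>U. s < weight is \<longrightarrow> \<omega> is x = 0)"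

definition coeffs_depend_upto :: "nat \<Rightarrow> nat \<Rightarrow> 'a form \<Rightarrow> bool" where
  "coeffs_depend_upto w k \<omega> \<longleftrightarrow> (\<forall>is. w \<le> weight is \<longrightarrow> depends_upto k (\<omega> is))"

text \<open>On a saturated domain this says that the components are affine in the coordinates of
  order k + 1, with coefficients on F^k.\<close>

definition top_partials_depend_upto :: "nat \<Rightarrow> 'a form \<Rightarrow> bool" where
  "top_partials_depend_upto k \<omega> \<longleftrightarrow> (\<forall>is a. jord a = Suc k \<longrightarrow> depends_upto k (pd a (\<omega> is)))"

lemma weight_bounded_mono: "weight_bounded s \<omega> \<Longrightarrow> s \<le> s' \<Longrightarrow> weight_bounded s' \<omega>"
  unfolding weight_bounded_def by auto

lemma coeffs_depend_upto_mono:
  "coeffs_depend_upto w k \<omega> \<Longrightarrow> w \<le> w' \<Longrightarrow> k \<le> k' \<Longrightarrow> coeffs_depend_upto w' k' \<omega>"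
  unfolding coeffs_depend_upto_def by (meson depends_upto_mono le_trans)

lemma smooth_form_Sform: "smooth_form \<omega> \<Longrightarrow> smooth_form (Sform j \<omega>)"
  unfolding smooth_form_def Sform_eq by (intro allI coord_smooth_sum coord_smooth_cmult) auto

lemma weight_bounded_Sform:
  assumes "weight_bounded (Suc s) \<omega>"
  shows "weight_bounded s (Sform j \<omega>)"
  unfolding weight_bounded_def
proof (intro allI ballI impI)
  fix "is" :: "'a idx list" and x assume "x \<in> U" "s < weight is"
  then have "\<omega> (is[a := raise_idx j (is ! a)]) x = 0" if "a < length is" for a
    using assms weight_raise_nth[OF that] unfolding weight_bounded_def by simp
  then show "Sform j \<omega> is x = 0" by (simp add: Sform_eq)
qed

lemma coeffs_depend_upto_Sform:
  assumes "coeffs_depend_upto (Suc w) k \<omega>"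
  shows "coeffs_depend_upto w k (Sform j \<omega>)"
  unfolding coeffs_depend_upto_def
proof (intro allI impI)
  fix "is" :: "'a idx list" assume "w \<le> weight is"
  then have "depends_upto k (\<omega> (is[a := raise_idx j (is ! a)]))" if "a < length is" for a
    using assms weight_raise_nth[OF that] unfolding coeffs_depend_upto_def by simp
  then have "depends_upto k (\<lambda>x. \<Sum>a<length is. real (jord (is ! a) + 1) * \<omega> (is[a := raise_idx j (is ! a)]) x)"
    by (intro depends_upto_sum depends_upto_cmult) auto
  then show "depends_upto k (Sform j \<omega> is)" by (simp add: Sform_eq[abs_def])
qed

lemma coeffs_depend_upto_0_Sform: "coeffs_depend_upto 0 k \<omega> \<Longrightarrow> coeffs_depend_upto 0 k (Sform j \<omega>)"
  using coeffs_depend_upto_Sform coeffs_depend_upto_mono by (metis le_refl zero_le)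

section \<open>Lie derivatives along the total derivatives\<close>

lemma ctr_Tvf_eq:
  assumes "weight_bounded N \<omega>" "x \<in> U"
  shows "ctr (Tvf j) \<omega> js x = (\<Sum>m\<in>idx_upto N. x (raise_idx j m) * \<omega> (m # js) x)"
proof -
  have "{m. x (fst m, sh j (snd m)) * \<omega> (m # js) x \<noteq> 0} \<subseteq> idx_upto N"
  proof
    fix m assume m: "m \<in> {m. x (fst m, sh j (snd m)) * \<omega> (m # js) x \<noteq> 0}"
    show "m \<in> idx_upto N"
    proof (rule ccontr)
      assume "m \<notin> idx_upto N"
      then have "N < weight (m # js)" by (simp add: idx_upto_def weight_Cons)
      then show False using assms m unfolding weight_bounded_def by simp
    qed
  qed
  then show ?thesis
    unfolding ctr_def Tvf_def raise_idx_def by (simp add: Sum_any.expand_superset[OF finite_idx_upto])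
qed

lemma sum_raise_idx_delta:
  assumes "weight_bounded N \<omega>" "x \<in> U"
  shows "(\<Sum>m\<in>idx_upto N. (if c = raise_idx j m then 1 else 0) * \<omega> (m # js) x)
    = (if lowerable j c then \<omega> (lower_idx j c # js) x else 0)"
proof (cases "lowerable j c")
  case True
  have "(\<Sum>m\<in>idx_upto N. (if c = raise_idx j m then 1 else 0) * \<omega> (m # js) x)
      = (\<Sum>m\<in>idx_upto N. if m = lower_idx j c then \<omega> (m # js) x else 0)"
    using True by (intro sum.cong) (auto simp: raise_idx_eq_iff)
  also have "\<dots> = \<omega> (lower_idx j c # js) x"
  proof (cases "lower_idx j c \<in> idx_upto N")
    case False
    then have "N < weight (lower_idx j c # js)" by (simp add: idx_upto_def weight_Cons)
    then show ?thesis using assms False unfolding weight_bounded_def by (simp add: sum.delta[OF finite_idx_upto])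
  qed (simp add: sum.delta[OF finite_idx_upto])
  finally show ?thesis using True by simp
qed (auto simp: raise_idx_eq_iff intro: sum.neutral)

text \<open>The coordinate formula for d_j: it acts on a coefficient by the chain rule and on du_c as
  du_{c-j}, which is zero when c contains no index j.  Truncating the chain rule to coordinates
  of order at most N is exact for forms of weight at most N with coefficients on F^N.\<close>

definition lie_T_coords :: "nat \<Rightarrow> nat \<Rightarrow> 'a form \<Rightarrow> 'a form" where
  "lie_T_coords N j \<omega> = (\<lambda>is x. (\<Sum>m\<in>idx_upto N. x (raise_idx j m) * pd m (\<omega> is) x) +
      (\<Sum>p<length is. (-1) ^ p * (if lowerable j (is ! p) then \<omega> (lower_idx j (is ! p) # drop_nth p is) x else 0)))"

context
  fixes \<omega> :: "'a form" and N :: nat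
  assumes smooth: "smooth_form \<omega>"
    and bounded: "weight_bounded N \<omega>"
    and coeffs: "coeffs_depend_upto 0 N \<omega>"
begin

lemma coeff_differentiable: "coord_differentiable (\<omega> js)"
  using smooth coord_smooth_differentiable unfolding smooth_form_def by blast

lemma depends_upto_coeff: "depends_upto N (\<omega> js)"
  using coeffs unfolding coeffs_depend_upto_def by simp

lemma lie_Tvf_eq:
  assumes x: "x \<in> U"
  shows "lie (Tvf j) \<omega> is x = lie_T_coords N j \<omega> is x"
proof -
  define A where "A p = (if lowerable j (is ! p) then \<omega> (lower_idx j (is ! p) # drop_nth p is) x else 0)" for p
  define B where "B p m = x (raise_idx j m) * pd (is ! p) (\<omega> (m # drop_nth p is)) x" for p m
  have "pd (is ! p) (ctr (Tvf j) \<omega> (drop_nth p is)) x = A p + (\<Sum>m\<in>idx_upto N. B p m)" for p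
  proof -
    have "pd (is ! p) (ctr (Tvf j) \<omega> (drop_nth p is)) x
        = pd (is ! p) (\<lambda>x. \<Sum>m\<in>idx_upto N. x (raise_idx j m) * \<omega> (m # drop_nth p is) x) x"
      using ctr_Tvf_eq[OF bounded] by (intro pd_cong[OF _ x]) (simp add: eq_on_U_def)
    also have "\<dots> = (\<Sum>m\<in>idx_upto N. pd (is ! p) (\<lambda>x. x (raise_idx j m) * \<omega> (m # drop_nth p is) x) x)"
      by (intro pd_sum[OF finite_idx_upto _ x] coord_differentiable_mult coord_differentiable_coord
          coeff_differentiable)
    also have "\<dots> = (\<Sum>m\<in>idx_upto N. (if is ! p = raise_idx j m then 1 else 0) * \<omega> (m # drop_nth p is) x + B p m)"
      by (intro sum.cong refl)
        (simp add: pd_mult[OF coord_differentiable_coord coeff_differentiable x] pd_coord B_def)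
    finally show ?thesis by (simp add: sum.distrib sum_raise_idx_delta[OF bounded x] A_def)
  qed
  then have d_ctr: "dform (ctr (Tvf j) \<omega>) is x
      = (\<Sum>p<length is. (-1) ^ p * A p) + (\<Sum>m\<in>idx_upto N. \<Sum>p<length is. (-1) ^ p * B p m)"
    by (simp add: dform_eq distrib_left sum.distrib sum_distrib_left sum.swap[of _ "idx_upto N"])
  have "{m. x (fst m, sh j (snd m)) * dform \<omega> (m # is) x \<noteq> 0} \<subseteq> idx_upto N"
  proof
    fix m assume m: "m \<in> {m. x (fst m, sh j (snd m)) * dform \<omega> (m # is) x \<noteq> 0}"
    show "m \<in> idx_upto N"
    proof (rule ccontr)
      assume "m \<notin> idx_upto N"
      then have high: "N < jord m" by (simp add: idx_upto_def)
      have "pd m (\<omega> is) x = 0" using pd_eq_0_if_depends_upto[OF depends_upto_coeff high x] .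
      moreover have "pd (is ! p) (\<omega> (m # drop_nth p is)) x = 0" for p
        using bounded high by (intro pd_eq_0[OF _ x]) (auto simp: eq_on_U_def weight_bounded_def weight_Cons)
      ultimately show False using m by (simp add: dform_Cons)
    qed
  qed
  then have "ctr (Tvf j) (dform \<omega>) is x = (\<Sum>m\<in>idx_upto N. x (raise_idx j m) * dform \<omega> (m # is) x)"
    unfolding ctr_def Tvf_def raise_idx_def by (simp add: Sum_any.expand_superset[OF finite_idx_upto])
  then have ctr_d: "ctr (Tvf j) (dform \<omega>) is x
      = (\<Sum>m\<in>idx_upto N. x (raise_idx j m) * pd m (\<omega> is) x) - (\<Sum>m\<in>idx_upto N. \<Sum>p<length is. (-1) ^ p * B p m)"
    by (simp add: dform_Cons B_def right_diff_distrib sum_distrib_left sum_subtractf algebra_simps)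
  show ?thesis unfolding lie_def lie_T_coords_def d_ctr ctr_d by (simp add: A_def)
qed

lemma eq_on_U_lie_Tvf: "eq_on_U (lie (Tvf j) \<omega> is) (lie_T_coords N j \<omega> is)"
  unfolding eq_on_U_def using lie_Tvf_eq by blast

lemma smooth_form_lie_Tvf: "smooth_form (lie (Tvf j) \<omega>)"
proof -
  have "coord_smooth (lie_T_coords N j \<omega> is)" for "is"
    using smooth unfolding lie_T_coords_def smooth_form_def
    by (intro coord_smooth_add coord_smooth_sum finite_idx_upto finite_lessThan coord_smooth_mult
        coord_smooth_coord coord_smooth_pd coord_smooth_cmult coord_smooth_if) auto
  then show ?thesis
    unfolding smooth_form_def using coord_smooth_cong eq_on_U_lie_Tvf eq_on_U_sym by blast
qed

lemma weight_bounded_lie_Tvf: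
  assumes "weight_bounded s \<omega>"
  shows "weight_bounded (Suc s) (lie (Tvf j) \<omega>)"
  unfolding weight_bounded_def
proof (intro allI ballI impI)
  fix "is" :: "'a idx list" and x assume x: "x \<in> U" and heavy: "Suc s < weight is"
  have "pd m (\<omega> is) x = 0" for m
    using assms heavy by (intro pd_eq_0[OF _ x]) (auto simp: eq_on_U_def weight_bounded_def)
  moreover have "(if lowerable j (is ! p) then \<omega> (lower_idx j (is ! p) # drop_nth p is) x else 0) = 0"
    if "p < length is" for p
  proof (cases "lowerable j (is ! p)")
    case True
    then have "s < weight (lower_idx j (is ! p) # drop_nth p is)"
      using weight_lower_drop_nth[OF that True] heavy by simp
    then show ?thesis using assms x True unfolding weight_bounded_def by simp
  qed simp
  ultimately show "lie (Tvf j) \<omega> is x = 0"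
    by (simp add: lie_Tvf_eq[OF x] lie_T_coords_def)
qed

lemma coeffs_depend_upto_lie_Tvf:
  assumes "2 \<le> N"
  shows "coeffs_depend_upto 0 (Suc N) (lie (Tvf j) \<omega>)"
  unfolding coeffs_depend_upto_def
proof (intro allI impI)
  fix "is" :: "'a idx list"
  have "depends_upto (Suc N) (lie_T_coords N j \<omega> is)"
    unfolding lie_T_coords_def
    using depends_upto_mono[OF depends_upto_coeff] depends_upto_mono[OF depends_upto_pd[OF assms depends_upto_coeff]]
    by (intro depends_upto_add depends_upto_sum finite_idx_upto finite_lessThan depends_upto_mult
        depends_upto_cmult depends_upto_if depends_upto_coord) (auto simp: idx_upto_def jord_raise_idx)
  then show "depends_upto (Suc N) (lie (Tvf j) \<omega> is)"
    using depends_upto_cong[OF _ _ eq_on_U_sym[OF eq_on_U_lie_Tvf]] assms by simp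
qed

text \<open>On components of weight above s the chain-rule part of d_j vanishes, so no derivative is
  taken and the order of dependence is not raised.\<close>

lemma coeffs_depend_upto_lie_Tvf_heavy:
  assumes "weight_bounded s \<omega>" "coeffs_depend_upto s k \<omega>" "2 \<le> k"
  shows "coeffs_depend_upto (Suc s) k (lie (Tvf j) \<omega>)"
  unfolding coeffs_depend_upto_def
proof (intro allI impI)
  fix "is" :: "'a idx list" assume heavy: "Suc s \<le> weight is"
  define G where "G x = (\<Sum>p<length is. (-1) ^ p *
      (if lowerable j (is ! p) then \<omega> (lower_idx j (is ! p) # drop_nth p is) x else 0))" for x
  have "depends_upto k (\<lambda>x. if lowerable j (is ! p) then \<omega> (lower_idx j (is ! p) # drop_nth p is) x else 0)"
    if "p < length is" for p
  proof (cases "lowerable j (is ! p)")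
    case True
    then show ?thesis
      using weight_lower_drop_nth[OF that True] assms(2) heavy unfolding coeffs_depend_upto_def by simp
  qed (simp add: depends_upto_const)
  then have "depends_upto k G"
    unfolding G_def by (intro depends_upto_sum depends_upto_cmult) auto
  moreover have "eq_on_U G (lie (Tvf j) \<omega> is)"
    unfolding eq_on_U_def
  proof
    fix x assume x: "x \<in> U"
    have "pd m (\<omega> is) x = 0" for m
      using assms(1) heavy by (intro pd_eq_0[OF _ x]) (auto simp: eq_on_U_def weight_bounded_def)
    then show "G x = lie (Tvf j) \<omega> is x"
      by (simp add: lie_Tvf_eq[OF x] lie_T_coords_def G_def)
  qed
  ultimately show "depends_upto k (lie (Tvf j) \<omega> is)" using depends_upto_cong assms(3) by blast
qed

lemma top_partials_depend_upto_lie_Tvf: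
  assumes "2 \<le> N"
  shows "top_partials_depend_upto N (lie (Tvf j) \<omega>)"
  unfolding top_partials_depend_upto_def
proof (intro allI impI)
  fix "is" :: "'a idx list" and a :: "'a idx" assume a: "jord a = Suc N"
  define G where "G x = (\<Sum>m\<in>idx_upto N. (if a = raise_idx j m then 1 else 0) * pd m (\<omega> is) x)" for x
  have pd_coeff: "depends_upto N (pd m (\<omega> js))" for m js
    using depends_upto_pd[OF assms depends_upto_coeff] .
  have "depends_upto N G"
    unfolding G_def by (intro depends_upto_sum finite_idx_upto depends_upto_cmult pd_coeff)
  moreover have "eq_on_U G (pd a (lie (Tvf j) \<omega> is))"
    unfolding eq_on_U_def
  proof
    fix x assume x: "x \<in> U"
    have high: "N < jord a" using a by simp
    have diff_pd: "coord_differentiable (pd m (\<omega> js))" for m js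
      using smooth coord_smooth_differentiable coord_smooth_pd unfolding smooth_form_def by blast
    have diff_low: "coord_differentiable (\<lambda>x. (-1) ^ p *
        (if lowerable j (is ! p) then \<omega> (lower_idx j (is ! p) # drop_nth p is) x else 0))" for p
      by (cases "lowerable j (is ! p)")
        (simp_all add: coord_differentiable_mult coord_differentiable_const coeff_differentiable)
    have chain: "pd a (\<lambda>x. x (raise_idx j m) * pd m (\<omega> is) x) x
        = (if a = raise_idx j m then 1 else 0) * pd m (\<omega> is) x" for m
      using pd_mult[OF coord_differentiable_coord diff_pd x, of a "raise_idx j m" m "is"]
        pd_eq_0_if_depends_upto[OF pd_coeff high x] by (simp add: pd_coord)
    have low: "pd a (\<lambda>x. (-1) ^ p *
        (if lowerable j (is ! p) then \<omega> (lower_idx j (is ! p) # drop_nth p is) x else 0)) x = 0" for p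
      by (cases "lowerable j (is ! p)")
        (simp_all add: pd_cmult[OF coeff_differentiable x]
          pd_eq_0_if_depends_upto[OF depends_upto_coeff high x] pd_const)
    have "pd a (lie (Tvf j) \<omega> is) x = pd a (lie_T_coords N j \<omega> is) x"
      by (rule pd_cong[OF eq_on_U_lie_Tvf x])
    also have "\<dots> = (\<Sum>m\<in>idx_upto N. pd a (\<lambda>x. x (raise_idx j m) * pd m (\<omega> is) x) x)
        + (\<Sum>p<length is. pd a (\<lambda>x. (-1) ^ p *
            (if lowerable j (is ! p) then \<omega> (lower_idx j (is ! p) # drop_nth p is) x else 0)) x)"
      unfolding lie_T_coords_def
      by (simp only: pd_add pd_sum finite_idx_upto finite_lessThan x diff_low diff_pd coord_differentiable_sum
          coord_differentiable_mult coord_differentiable_coord)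
    also have "\<dots> = G x" by (simp add: chain low G_def)
    finally show "G x = pd a (lie (Tvf j) \<omega> is) x" by simp
  qed
  ultimately show "depends_upto N (pd a (lie (Tvf j) \<omega> is))" using depends_upto_cong assms by blast
qed

end

lemma smooth_form_dform: "smooth_form \<omega> \<Longrightarrow> smooth_form (dform \<omega>)"
  unfolding smooth_form_def dform_eq
  by (intro allI coord_smooth_sum coord_smooth_cmult coord_smooth_pd) auto

lemma weight_bounded_dform:
  assumes "\<And>js c x. x \<in> U \<Longrightarrow> s < weight js + jord c \<Longrightarrow> pd c (\<omega> js) x = 0"
  shows "weight_bounded s (dform \<omega>)"
  unfolding weight_bounded_def
proof (intro allI ballI impI)
  fix "is" :: "'a idx list" and x assume "x \<in> U" "s < weight is"
  then have "pd (is ! p) (\<omega> (drop_nth p is)) x = 0" if "p < length is" for p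
    using assms weight_drop_nth[OF that] by simp
  then show "dform \<omega> is x = 0" by (simp add: dform_eq)
qed

lemma coeffs_depend_upto_dform:
  assumes "\<And>js c. w \<le> weight js + jord c \<Longrightarrow> depends_upto k (pd c (\<omega> js))"
  shows "coeffs_depend_upto w k (dform \<omega>)"
  unfolding coeffs_depend_upto_def
proof (intro allI impI)
  fix "is" :: "'a idx list" assume "w \<le> weight is"
  then have "depends_upto k (pd (is ! p) (\<omega> (drop_nth p is)))" if "p < length is" for p
    using assms[of "drop_nth p is" "is ! p"] weight_drop_nth[OF that] by simp
  then have "depends_upto k (\<lambda>x. \<Sum>p<length is. (-1) ^ p * pd (is ! p) (\<omega> (drop_nth p is)) x)"
    by (intro depends_upto_sum depends_upto_cmult) auto
  then show "depends_upto k (dform \<omega> is)" by (simp add: dform_eq[abs_def])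
qed

section \<open>The Hilbert forms and the fundamental form\<close>

lemma fn0_eq: "fn0 L js = (if js = [] then L else (\<lambda>_. 0))"
  by (auto simp: fn0_def fun_eq_iff)

lemma dform_Lagrangian_bounds:
  assumes "fun_on 2 L" "smooth_on U L"
  shows "smooth_form (dform (fn0 L))"
    and "weight_bounded 2 (dform (fn0 L))"
    and "coeffs_depend_upto 0 2 (dform (fn0 L))"
proof -
  have smooth: "coord_smooth L" using assms(2) unfolding smooth_on_def coord_smooth_def coord_differentiable_def by blast
  have dep: "depends_upto 2 L" using assms(1) unfolding fun_on_def depends_upto_def by blast
  show "smooth_form (dform (fn0 L))"
    using smooth by (intro smooth_form_dform) (simp add: smooth_form_def fn0_eq coord_smooth_const)
  show "weight_bounded 2 (dform (fn0 L))"
    using pd_eq_0_if_depends_upto[OF dep]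
    by (intro weight_bounded_dform) (auto simp: fn0_eq pd_const weight_def)
  show "coeffs_depend_upto 0 2 (dform (fn0 L))"
    by (rule coeffs_depend_upto_dform) (auto simp: fn0_eq pd_const depends_upto_const intro: depends_upto_pd dep)
qed

lemma hilbert_eq:
  "hilbert L i is = (\<lambda>x. Sform i (dform (fn0 L)) is x
    - 1/2 * (lie (Tvf 1) (Sform 1 (Sform i (dform (fn0 L)))) is x + lie (Tvf 2) (Sform 2 (Sform i (dform (fn0 L)))) is x))"
  by (simp add: hilbert_def fun_eq_iff)

lemma hilbert_form_bounds:
  assumes "fun_on 2 L" "smooth_on U L"
  shows "smooth_form (hilbert L i)"
    and "weight_bounded 1 (hilbert L i)"
    and "coeffs_depend_upto 0 3 (hilbert L i)"
    and "coeffs_depend_upto 1 2 (hilbert L i)"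
    and "top_partials_depend_upto 2 (hilbert L i)"
proof -
  let ?dL = "dform (fn0 L)"
  note dL = dform_Lagrangian_bounds[OF assms]
  have S: "smooth_form (Sform i ?dL)" "weight_bounded 1 (Sform i ?dL)" "coeffs_depend_upto 0 2 (Sform i ?dL)"
    using dL by (auto intro: smooth_form_Sform coeffs_depend_upto_0_Sform weight_bounded_Sform simp: numeral_2_eq_2)
  have SS: "smooth_form (Sform j (Sform i ?dL))" "weight_bounded 0 (Sform j (Sform i ?dL))"
    "weight_bounded 2 (Sform j (Sform i ?dL))" "coeffs_depend_upto 0 2 (Sform j (Sform i ?dL))" for j
    using S by (auto intro: smooth_form_Sform coeffs_depend_upto_0_Sform weight_bounded_Sform weight_bounded_mono)
  let ?l = "\<lambda>j. lie (Tvf j) (Sform j (Sform i ?dL))"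
  have l: "smooth_form (?l j)" "weight_bounded 1 (?l j)" "coeffs_depend_upto 0 3 (?l j)"
    "coeffs_depend_upto 1 2 (?l j)" "top_partials_depend_upto 2 (?l j)" for j
    using smooth_form_lie_Tvf[OF SS(1,3,4)] weight_bounded_lie_Tvf[OF SS(1,3,4,2)]
      coeffs_depend_upto_lie_Tvf[OF SS(1,3,4)] coeffs_depend_upto_lie_Tvf_heavy[OF SS(1,3,4,2,4)]
      top_partials_depend_upto_lie_Tvf[OF SS(1,3,4)]
    by (simp_all add: numeral_3_eq_3)
  show "smooth_form (hilbert L i)"
    using S(1) l(1) unfolding smooth_form_def hilbert_eq
    by (intro allI coord_smooth_diff coord_smooth_cmult coord_smooth_add) auto
  show "weight_bounded 1 (hilbert L i)"
    using S(2) l(2) unfolding weight_bounded_def hilbert_eq by simp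
  show "coeffs_depend_upto 0 3 (hilbert L i)"
    using coeffs_depend_upto_mono[OF S(3), of 0 3] l(3) unfolding coeffs_depend_upto_def hilbert_eq
    by (intro allI impI depends_upto_diff depends_upto_cmult depends_upto_add) simp_all
  show "coeffs_depend_upto 1 2 (hilbert L i)"
    using S(3) l(4) unfolding coeffs_depend_upto_def hilbert_eq
    by (intro allI impI depends_upto_diff depends_upto_cmult depends_upto_add) simp_all
  show "top_partials_depend_upto 2 (hilbert L i)"
    unfolding top_partials_depend_upto_def
  proof (intro allI impI)
    fix "is" and a :: "'a idx" assume a: "jord a = Suc 2"
    have diff: "coord_differentiable (Sform i ?dL is)" "coord_differentiable (?l 1 is)"
      "coord_differentiable (?l 2 is)"
      using S(1) l(1) coord_smooth_differentiable unfolding smooth_form_def by blast+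
    note diff_sum = coord_differentiable_add[OF diff(2,3)]
    have "eq_on_U (\<lambda>x. - (1/2) * (pd a (?l 1 is) x + pd a (?l 2 is) x)) (pd a (hilbert L i is))"
      unfolding eq_on_U_def
    proof
      fix x assume x: "x \<in> U"
      have "pd a (hilbert L i is) x = pd a (Sform i ?dL is) x - 1/2 * (pd a (?l 1 is) x + pd a (?l 2 is) x)"
        unfolding hilbert_eq
        by (simp only: pd_diff[OF diff(1) coord_differentiable_mult[OF coord_differentiable_const diff_sum] x]
            pd_cmult[OF diff_sum x] pd_add[OF diff(2,3) x])
      moreover have "pd a (Sform i ?dL is) x = 0"
        using pd_eq_0_if_depends_upto[OF _ _ x, of 2 "Sform i ?dL is" a] S(3) a
        unfolding coeffs_depend_upto_def by simp
      ultimately show "- (1/2) * (pd a (?l 1 is) x + pd a (?l 2 is) x) = pd a (hilbert L i is) x"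
        by simp
    qed
    moreover have "depends_upto 2 (\<lambda>x. - (1/2) * (pd a (?l 1 is) x + pd a (?l 2 is) x))"
      using l(5)[of 1] l(5)[of 2] a unfolding top_partials_depend_upto_def
      by (intro depends_upto_cmult depends_upto_add) blast+
    ultimately show "depends_upto 2 (pd a (hilbert L i is))" using depends_upto_cong by blast
  qed
qed

text \<open>The weight-3 components of d vartheta^i live on F^2: a weight-3 index list either puts
  weight at least 1 on a component of vartheta^i, or differentiates a weight-0 component along a
  third-order coordinate.\<close>

lemma dform_hilbert_form_bounds:
  assumes "fun_on 2 L" "smooth_on U L"
  shows "smooth_form (dform (hilbert L i))"
    and "weight_bounded 3 (dform (hilbert L i))"
    and "coeffs_depend_upto 0 3 (dform (hilbert L i))"
    and "coeffs_depend_upto 3 2 (dform (hilbert L i))"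
proof -
  let ?t = "hilbert L i"
  note t = hilbert_form_bounds[OF assms, of i]
  have zero: "eq_on_U (?t js) (\<lambda>_. 0)" if "2 \<le> weight js" for js
    using t(2) that unfolding weight_bounded_def eq_on_U_def by auto
  have dep3: "depends_upto 3 (?t js)" for js
    using t(3) unfolding coeffs_depend_upto_def by auto
  have dep2: "depends_upto 2 (?t js)" if "1 \<le> weight js" for js
    using t(4) that unfolding coeffs_depend_upto_def by auto
  show "smooth_form (dform ?t)" using smooth_form_dform[OF t(1)] .
  show "weight_bounded 3 (dform ?t)"
  proof (rule weight_bounded_dform)
    fix js :: "'a idx list" and c :: "'a idx" and x assume x: "x \<in> U" and heavy: "3 < weight js + jord c"
    consider "2 \<le> weight js" | "weight js = 1" | "weight js = 0" by linarith
    then show "pd c (?t js) x = 0"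
    proof cases
      case 1 then show ?thesis using pd_eq_0[OF zero x] by blast
    next
      case 2 then show ?thesis using pd_eq_0_if_depends_upto[OF dep2 _ x] heavy by simp
    next
      case 3 then show ?thesis using pd_eq_0_if_depends_upto[OF dep3 _ x] heavy by simp
    qed
  qed
  show "coeffs_depend_upto 0 3 (dform ?t)"
    by (rule coeffs_depend_upto_dform) (auto intro: depends_upto_pd dep3)
  show "coeffs_depend_upto 3 2 (dform ?t)"
  proof (rule coeffs_depend_upto_dform)
    fix js :: "'a idx list" and c :: "'a idx" assume heavy: "3 \<le> weight js + jord c"
    have vanishing: "depends_upto 2 (pd c (?t js))" if "eq_on_U (pd c (?t js)) (\<lambda>_. 0)"
      using depends_upto_if_eq_0[OF _ that] by simp
    consider "2 \<le> weight js" | "weight js = 1" | "weight js = 0" "jord c = Suc 2"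
      | "weight js = 0" "3 < jord c"
      using heavy by linarith
    then show "depends_upto 2 (pd c (?t js))"
    proof cases
      case 1 then show ?thesis using vanishing pd_eq_0[OF zero] eq_on_U_def by blast
    next
      case 2 then show ?thesis using depends_upto_pd dep2 by simp
    next
      case 3 then show ?thesis using t(5) unfolding top_partials_depend_upto_def by blast
    next
      case 4 then show ?thesis using vanishing pd_eq_0_if_depends_upto[OF dep3] eq_on_U_def by blast
    qed
  qed
qed

lemma Pop_eq:
  "Pop i \<omega> is = (\<lambda>x. 1/4 * Sform i \<omega> is x
      - 1/24 * (\<Sum>j\<in>{1,2}. lie (Tvf j) (Sform j (Sform i \<omega>)) is x)
      + 1/192 * (\<Sum>j\<in>{1,2}. \<Sum>k\<in>{1,2}. lie (Tvf j) (lie (Tvf k) (Sform j (Sform k (Sform i \<omega>)))) is x))"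
  by (simp add: Pop_def fun_eq_iff)

lemma Pop_bounds:
  assumes "smooth_form \<omega>" "weight_bounded 3 \<omega>" "coeffs_depend_upto 0 3 \<omega>" "coeffs_depend_upto 3 2 \<omega>"
  shows "weight_bounded 2 (Pop i \<omega>)"
    and "coeffs_depend_upto 0 4 (Pop i \<omega>)"
proof -
  have S: "weight_bounded 2 (Sform i \<omega>)" "coeffs_depend_upto 0 4 (Sform i \<omega>)"
    using assms coeffs_depend_upto_mono[OF coeffs_depend_upto_0_Sform[OF assms(3)], of 0 4]
    by (auto intro: weight_bounded_Sform simp: numeral_3_eq_3 numeral_2_eq_2)
  let ?X = "\<lambda>j. Sform j (Sform i \<omega>)"
  have X: "smooth_form (?X j)" "weight_bounded 1 (?X j)" "weight_bounded 3 (?X j)" "coeffs_depend_upto 0 3 (?X j)" for j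
    using assms by (auto intro!: smooth_form_Sform coeffs_depend_upto_0_Sform weight_bounded_Sform
        intro: weight_bounded_mono simp: numeral_3_eq_3 numeral_2_eq_2)
  have SX: "weight_bounded 2 (lie (Tvf j) (?X j))" "coeffs_depend_upto 0 4 (lie (Tvf j) (?X j))" for j
    using weight_bounded_lie_Tvf[OF X(1,3,4,2)] coeffs_depend_upto_lie_Tvf[OF X(1,3,4)]
    by (simp_all add: numeral_2_eq_2 eval_nat_numeral)
  let ?Y = "\<lambda>j k. Sform j (Sform k (Sform i \<omega>))"
  have "coeffs_depend_upto 2 2 (Sform i \<omega>)"
    using coeffs_depend_upto_Sform[of 2] assms(4) by (simp add: numeral_3_eq_3)
  then have "coeffs_depend_upto 1 2 (Sform k (Sform i \<omega>))" for k
    using coeffs_depend_upto_Sform[of 1] by (simp add: numeral_2_eq_2)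
  then have Y: "smooth_form (?Y j k)" "weight_bounded 0 (?Y j k)" "weight_bounded 2 (?Y j k)"
    "coeffs_depend_upto 0 2 (?Y j k)" for j k
    using assms(1,2) coeffs_depend_upto_Sform[of 0]
    by (auto intro!: smooth_form_Sform weight_bounded_Sform intro: weight_bounded_mono simp: numeral_3_eq_3)
  let ?Z = "\<lambda>j k. lie (Tvf k) (?Y j k)"
  have Z: "smooth_form (?Z j k)" "weight_bounded 1 (?Z j k)" "weight_bounded 3 (?Z j k)"
    "coeffs_depend_upto 0 3 (?Z j k)" for j k
    using smooth_form_lie_Tvf[OF Y(1,3,4)] weight_bounded_lie_Tvf[OF Y(1,3,4,2)]
      weight_bounded_mono[OF weight_bounded_lie_Tvf[OF Y(1,3,4,2)], of 3] coeffs_depend_upto_lie_Tvf[OF Y(1,3,4)]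
    by (simp_all add: numeral_3_eq_3)
  have SZ: "weight_bounded 2 (lie (Tvf j) (?Z j k))" "coeffs_depend_upto 0 4 (lie (Tvf j) (?Z j k))" for j k
    using weight_bounded_lie_Tvf[OF Z(1,3,4,2)] coeffs_depend_upto_lie_Tvf[OF Z(1,3,4)]
    by (simp_all add: numeral_2_eq_2 eval_nat_numeral)
  show "weight_bounded 2 (Pop i \<omega>)"
    using S(1) SX(1) SZ(1) unfolding weight_bounded_def Pop_eq by simp
  show "coeffs_depend_upto 0 4 (Pop i \<omega>)"
    using S(2) SX(2) SZ(2) unfolding coeffs_depend_upto_def Pop_eq
    by (intro allI impI depends_upto_add depends_upto_diff depends_upto_cmult depends_upto_sum) simp_all
qed

lemma fundamental_form_bounds:
  assumes "fun_on 2 L" "smooth_on U L"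
  shows "weight_bounded 2 (fundamental_form L)"
    and "coeffs_depend_upto 0 4 (fundamental_form L)"
proof -
  have P: "weight_bounded 2 (Pop j (dform (hilbert L i)))" "coeffs_depend_upto 0 4 (Pop j (dform (hilbert L i)))"
    for i j
    using Pop_bounds[OF dform_hilbert_form_bounds[OF assms]] by blast+
  have eq: "fundamental_form L is = (\<lambda>x. Pop 2 (dform (hilbert L 1)) is x - Pop 1 (dform (hilbert L 2)) is x)"
    for "is"
    by (simp add: fundamental_form_def fun_eq_iff)
  show "weight_bounded 2 (fundamental_form L)"
    using P(1) unfolding weight_bounded_def eq by simp
  show "coeffs_depend_upto 0 4 (fundamental_form L)"
    using P(2) unfolding coeffs_depend_upto_def eq by (auto intro: depends_upto_diff)
qed

lemma projectable_to_if_weight_bounded: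
  assumes "weight_bounded k \<omega>" "k \<le> l" "coeffs_depend_upto 0 l \<omega>"
  shows "projectable_to l U \<omega>"
  unfolding projectable_to_def
proof (intro conjI ballI allI impI)
  fix x and "is" :: "'a idx list" assume "x \<in> U" "\<exists>m\<in>set is. l < jord m"
  then show "\<omega> is x = 0"
    using assms(1,2) jord_le_weight unfolding weight_bounded_def by (meson le_trans not_le)
next
  fix x y "is" assume "x \<in> U" "agree_upto l x y"
  then show "\<omega> is x = \<omega> is y"
    using assms(3) unfolding coeffs_depend_upto_def depends_upto_def by blast
qed

lemma horizontal_over_if_weight_bounded:
  assumes "weight_bounded k \<omega>"
  shows "horizontal_over k l U \<omega>"
  unfolding horizontal_over_def
proof (intro allI impI ballI)
  fix X :: "'a vf" and x "is"
  assume X: "\<forall>m x. jord m \<le> k \<or> l < jord m \<longrightarrow> X m x = 0" and x: "x \<in> U"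
  have zero: "X m x * \<omega> (m # is) x = 0" for m
  proof (cases "jord m \<le> k")
    case False
    then have "k < weight (m # is)" by (simp add: weight_Cons)
    then show ?thesis using assms x unfolding weight_bounded_def by simp
  qed (simp add: X)
  then show "ctr X \<omega> is x = 0" unfolding ctr_def zero by simp
qed

end

theorem theorem4:
  fixes U :: "('a::finite) pt set" and L :: "'a pt \<Rightarrow> real"
  assumes "open_in_frames 2 U"
    and "fun_on 2 L"
    and "smooth_on U L"
    and "homogeneous U L"
  shows "projectable_to 4 U (fundamental_form L) \<and> horizontal_over 2 5 U (fundamental_form L)"
proof -
  interpret frame_domain U
    using assms(1) unfolding open_in_frames_def by unfold_locales auto
  note Theta = fundamental_form_bounds[OF assms(2,3)]
  show ?thesis
    using projectable_to_if_weight_bounded[OF Theta(1) _ Theta(2)] horizontal_over_if_weight_bounded[OF Theta(1)]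
    by simp
qed

end
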